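(* Let $q>1$ be an integer and $f$ as in the context, and for $\delta\in(0,1]$ let $f_\delta(u)=\frac{f(u)}{1+\sqrt{\delta}|u|^{2q-2}}$. Then there exist constants $\tilde L_f$ and $\tilde l_f$ independent of $\delta$ such that \[ \sup_{u\in\mathbb{R}}f_\delta'(u)\le\tilde L_f,\qquad |f_\delta'(u)|\le\tilde l_f\big(1+(|u|^{2q-2}\wedge\delta^{-1/2})\big)\quad\text{for all }u\in\mathbb{R}. \]
   Context: $f(v)=-c_fv^{2q-1}+f_0(v)$, $v\in\mathbb{R}$, with $c_f>0$ and $f_0:\mathbb{R}\to\mathbb{R}$ twice differentiable satisfying $|f_0(v)|\le c_{f,0}(1+|v|^{2q-2})$ and $|f_0'(v)|+|f_0''(v)|\le c_{f,1}(1+|v|^{2q-3})$ for all $v$, with constants $c_{f,0},c_{f,1}>0$. *)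

theory Defs
  imports "HOL-Analysis.Analysis"
begin

definition fnl :: "nat \<Rightarrow> real \<Rightarrow> (real \<Rightarrow> real) \<Rightarrow> real \<Rightarrow> real" where
  "fnl q c_f f0 v = - c_f * v ^ (2*q - 1) + f0 v"

definition fdelta :: "nat \<Rightarrow> real \<Rightarrow> (real \<Rightarrow> real) \<Rightarrow> real \<Rightarrow> real \<Rightarrow> real" where
  "fdelta q c_f f0 \<delta> u = fnl q c_f f0 u / (1 + sqrt \<delta> * \<bar>u\<bar> ^ (2*q - 2))"

end

theory Submission
  imports Defs
begin

text \<open>
  Write s = sqrt \<delta>, n = 2q - 2 and g = 1 + s u^n. The quotient rule gives
  f_\<delta>' = - c u^n (n + 1 + s u^n) / g^2 + f0' / g - s n u^(n-1) f0 / g^2.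
  The first term lies between -(n + 1) c u^n / g and -c u^n / g, and since
  s (1 + |u|^n) \<le> g the other two are O(1 + |u|^(n-1)) / g. Hence f_\<delta>' is at most
  (c1 + C |u|^(n-1) - c |u|^n) / g with C = c1 + n c0, which is bounded because c x^n dominates C x^(n-1);
  and |f_\<delta>'| \<le> K (1 + |u|^n / g) with |u|^n / g \<le> min |u|^n (1/s).
\<close>

text \<open>f_\<delta>'(u) in the form above, with F0 and F1 standing for f0 u and f0' u.\<close>

definition fdelta_slope :: "nat \<Rightarrow> real \<Rightarrow> real \<Rightarrow> real \<Rightarrow> real \<Rightarrow> real \<Rightarrow> real" where
  "fdelta_slope n c s F0 F1 u =
     - c * u^n * (real n + 1 + s * u^n) / (1 + s * u^n)^2 + F1 / (1 + s * u^n)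
     - s * real n * u^(n-1) * F0 / (1 + s * u^n)^2"

lemma has_real_derivative_regularised_quotient:
  fixes c s F1 u :: real and f0 :: "real \<Rightarrow> real"
  assumes f0: "(f0 has_real_derivative F1) (at u)" and nonzero: "1 + s * u^n \<noteq> 0"
  shows "((\<lambda>v. (- c * v^(n+1) + f0 v) / (1 + s * v^n)) has_real_derivative
           fdelta_slope n c s (f0 u) F1 u) (at u)"
proof -
  define g where "g = 1 + s * u^n"
  have deriv: "((\<lambda>v. (- c * v^(n+1) + f0 v) / (1 + s * v^n)) has_real_derivative
      ((- c * (real (n+1) * u^n) + F1) * g - (- c * u^(n+1) + f0 u) * (s * (real n * u^(n-1))))
        / (g * g)) (at u)"
    unfolding g_def by (rule derivative_eq_intros refl f0 | simp add: nonzero)+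
  have "u^(n+1) * (real n * u^(n-1)) = real n * (u^n * u^n)"
    by (cases n) (simp_all add: algebra_simps)
  then have "(- c * (real (n+1) * u^n) + F1) * g - (- c * u^(n+1) + f0 u) * (s * (real n * u^(n-1)))
      = - c * u^n * (real n + 1 + s * u^n) + F1 * g - s * real n * u^(n-1) * f0 u"
    unfolding g_def by (simp add: algebra_simps)
  then have "((- c * (real (n+1) * u^n) + F1) * g - (- c * u^(n+1) + f0 u) * (s * (real n * u^(n-1))))
        / (g * g)
      = - c * u^n * (real n + 1 + s * u^n) / (g * g) + F1 * g / (g * g) - s * real n * u^(n-1) * f0 u / (g * g)"
    by (simp only: add_divide_distrib diff_divide_distrib)
  also have "\<dots> = fdelta_slope n c s (f0 u) F1 u"
    using nonzero unfolding fdelta_slope_def g_def power2_eq_square by simp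
  finally show ?thesis
    using deriv by simp
qed

lemma power_pred_le_one_plus_power:
  fixes x :: real
  assumes "0 \<le> x"
  shows "x^(n-1) \<le> 1 + x^n"
proof (cases "x \<le> 1")
  case True
  then have "x^(n-1) \<le> 1" using assms by (simp add: power_le_one)
  then show ?thesis using assms by (simp add: add_increasing2)
next
  case False
  then have "x^(n-1) \<le> x^n" by (intro power_increasing) auto
  then show ?thesis by simp
qed

lemma power_pred_minus_power_le:
  fixes x c C :: real
  assumes "0 \<le> x" "0 < c" "0 \<le> C"
  shows "C * x^(n-1) - c * x^n \<le> C * (C/c)^(n-1)"
proof (cases "x \<le> C/c")
  case True
  then have "C * x^(n-1) \<le> C * (C/c)^(n-1)"
    using assms by (intro mult_left_mono power_mono) auto
  moreover have "0 \<le> c * x^n" using assms by simp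
  ultimately show ?thesis by linarith
next
  case False
  then have "C \<le> c * x" using assms by (simp add: field_simps)
  then have C_le: "C * x^(n-1) \<le> c * x * x^(n-1)" using assms by (intro mult_right_mono) auto
  show ?thesis
  proof (cases n)
    case 0
    then show ?thesis using assms by simp
  next
    case (Suc m)
    then have "C * x^(n-1) \<le> c * x^n" using C_le by (simp add: mult.assoc)
    moreover have "0 \<le> C * (C/c)^(n-1)" using assms by simp
    ultimately show ?thesis by linarith
  qed
qed

lemma regularisation_ratio_bounds:
  fixes a s P :: real
  assumes "1 \<le> a" "0 \<le> s" "0 \<le> P"
  shows "1 \<le> (a + s*P) / (1 + s*P)" and "(a + s*P) / (1 + s*P) \<le> a"
proof -
  have g: "0 < 1 + s*P" using assms by (simp add: add_pos_nonneg)
  show "1 \<le> (a + s*P) / (1 + s*P)" using assms g by (simp add: le_divide_eq)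
  have "1 * (s*P) \<le> a * (s*P)" using assms by (intro mult_right_mono) auto
  then have "a + s*P \<le> a * (1 + s*P)" by (simp add: algebra_simps)
  then show "(a + s*P) / (1 + s*P) \<le> a" using g by (simp add: divide_le_eq)
qed

lemma fdelta_slope_bounds:
  fixes c c0 s u F0 F1 :: real
  assumes n: "even n" and s: "0 \<le> s" "s \<le> 1" and c: "0 \<le> c" and c0: "0 \<le> c0"
    and F0: "\<bar>F0\<bar> \<le> c0 * (1 + \<bar>u\<bar>^n)"
  defines "P \<equiv> \<bar>u\<bar>^n" and "R \<equiv> \<bar>u\<bar>^(n-1)" and "g \<equiv> 1 + s * \<bar>u\<bar>^n"
  shows "fdelta_slope n c s F0 F1 u \<le> (F1 + real n * c0 * R - c * P) / g"
    and "\<bar>fdelta_slope n c s F0 F1 u\<bar> \<le> ((real n + 1) * c * P + \<bar>F1\<bar> + real n * c0 * R) / g"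
proof -
  have P0: "0 \<le> P" and R0: "0 \<le> R" unfolding P_def R_def by simp_all
  have g: "1 \<le> g" unfolding g_def using s by simp
  define \<rho> where "\<rho> = (real n + 1 + s * P) / g"
  have \<rho>: "1 \<le> \<rho>" "\<rho> \<le> real n + 1"
    unfolding \<rho>_def g_def P_def using regularisation_ratio_bounds[of "real n + 1" s "\<bar>u\<bar>^n"] s by auto
  define w where "w = c * P / g"
  define v where "v = s * real n * u^(n-1) * F0 / g^2"
  have slope: "fdelta_slope n c s F0 F1 u = - (w * \<rho>) + F1 / g - v"
    unfolding fdelta_slope_def v_def w_def \<rho>_def g_def P_def using n
    by (simp add: power_even_abs power2_eq_square)
  have "\<bar>s * real n * u^(n-1) * F0\<bar> = real n * R * (s * \<bar>F0\<bar>)"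
    unfolding R_def using s by (simp add: abs_mult power_abs)
  also have "\<dots> \<le> real n * R * (s * (c0 * (1 + P)))"
    using F0 s R0 unfolding P_def by (intro mult_left_mono) auto
  also have "\<dots> \<le> real n * R * (c0 * g)"
    using R0 mult_left_mono[OF s(2) c0] unfolding g_def P_def
    by (intro mult_left_mono) (auto simp: algebra_simps)
  finally have "\<bar>v\<bar> \<le> real n * R * (c0 * g) / g^2"
    unfolding v_def using g by (simp add: divide_right_mono)
  also have "\<dots> = real n * c0 * R / g"
    using g by (simp add: power2_eq_square)
  finally have v: "\<bar>v\<bar> \<le> real n * c0 * R / g" .
  have "0 \<le> w" unfolding w_def using c P0 g by simp
  then have w\<rho>: "w \<le> w * \<rho>" "w * \<rho> \<le> w * (real n + 1)"
    using mult_left_mono[OF \<rho>(1), of w] mult_left_mono[OF \<rho>(2), of w] by simp_all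
  have split: "(F1 + real n * c0 * R - c * P) / g = F1 / g + real n * c0 * R / g - w"
    "((real n + 1) * c * P + \<bar>F1\<bar> + real n * c0 * R) / g
        = w * (real n + 1) + \<bar>F1\<bar> / g + real n * c0 * R / g"
    unfolding w_def by (simp_all add: add_divide_distrib diff_divide_distrib)
  show "fdelta_slope n c s F0 F1 u \<le> (F1 + real n * c0 * R - c * P) / g"
    unfolding slope using w\<rho> split v by linarith
  have "\<bar>F1 / g\<bar> = \<bar>F1\<bar> / g" using g by simp
  then show "\<bar>fdelta_slope n c s F0 F1 u\<bar> \<le> ((real n + 1) * c * P + \<bar>F1\<bar> + real n * c0 * R) / g"
    unfolding slope using w\<rho> split v \<open>0 \<le> w\<close> by (smt (verit))
qed

lemma fdelta_slope_le:
  fixes c c0 c1 s u F0 F1 :: real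
  assumes n: "even n" and s: "0 \<le> s" "s \<le> 1" and c: "0 < c" and c0: "0 \<le> c0" and c1: "0 \<le> c1"
    and F0: "\<bar>F0\<bar> \<le> c0 * (1 + \<bar>u\<bar>^n)" and F1: "\<bar>F1\<bar> \<le> c1 * (1 + \<bar>u\<bar>^(n-1))"
  defines "C \<equiv> c1 + real n * c0"
  shows "fdelta_slope n c s F0 F1 u \<le> c1 + C * (C/c)^(n-1)"
proof -
  define g where "g = 1 + s * \<bar>u\<bar>^n"
  have g: "1 \<le> g" unfolding g_def using s by simp
  have "fdelta_slope n c s F0 F1 u \<le> (F1 + real n * c0 * \<bar>u\<bar>^(n-1) - c * \<bar>u\<bar>^n) / g"
    unfolding g_def using fdelta_slope_bounds(1)[OF n s] c c0 F0 by simp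
  also have "\<dots> \<le> (c1 + (C * \<bar>u\<bar>^(n-1) - c * \<bar>u\<bar>^n)) / g"
    using F1 g unfolding C_def by (intro divide_right_mono) (auto simp: algebra_simps)
  also have "\<dots> \<le> (c1 + C * (C/c)^(n-1)) / g"
    using power_pred_minus_power_le[of "\<bar>u\<bar>" c C n] c c0 c1 g unfolding C_def
    by (intro divide_right_mono) auto
  also have "\<dots> \<le> c1 + C * (C/c)^(n-1)"
  proof -
    have "0 \<le> c1 + C * (C/c)^(n-1)" using c c0 c1 unfolding C_def by simp
    then show ?thesis using g by (simp add: divide_le_eq mult_le_cancel_left1)
  qed
  finally show ?thesis .
qed

lemma abs_fdelta_slope_le:
  fixes c c0 c1 s u F0 F1 :: real
  assumes n: "even n" and s: "0 < s" "s \<le> 1" and c: "0 \<le> c" and c0: "0 \<le> c0" and c1: "0 \<le> c1"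
    and F0: "\<bar>F0\<bar> \<le> c0 * (1 + \<bar>u\<bar>^n)" and F1: "\<bar>F1\<bar> \<le> c1 * (1 + \<bar>u\<bar>^(n-1))"
  defines "K \<equiv> (real n + 1) * c + 2 * c1 + real n * c0"
  shows "\<bar>fdelta_slope n c s F0 F1 u\<bar> \<le> K * (1 + min (\<bar>u\<bar>^n) (1/s))"
proof -
  define P where "P = \<bar>u\<bar>^n"
  define g where "g = 1 + s * P"
  have P0: "0 \<le> P" unfolding P_def by simp
  have g: "1 \<le> g" unfolding g_def using s P0 by simp
  have R: "\<bar>u\<bar>^(n-1) \<le> 1 + P"
    unfolding P_def by (rule power_pred_le_one_plus_power) simp
  have K: "0 \<le> K" unfolding K_def using c c0 c1 by simp
  have "\<bar>fdelta_slope n c s F0 F1 u\<bar> \<le> ((real n + 1) * c * P + \<bar>F1\<bar> + real n * c0 * \<bar>u\<bar>^(n-1)) / g"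
    unfolding g_def P_def using fdelta_slope_bounds(2)[OF n] s c c0 F0 by simp
  also have "\<dots> \<le> ((real n + 1) * c * P + c1 * (2 + P) + real n * c0 * (1 + P)) / g"
  proof -
    have "\<bar>F1\<bar> \<le> c1 * (2 + P)"
      using F1 mult_left_mono[of "1 + \<bar>u\<bar>^(n-1)" "2 + P" c1] R c1 by linarith
    then show ?thesis using R c c0 g by (intro divide_right_mono add_mono mult_left_mono) auto
  qed
  also have "\<dots> \<le> K * (P / g) + K / g"
    using g c c1 c0 P0 unfolding K_def by (simp add: field_simps)
  also have "\<dots> \<le> K * min P (1/s) + K"
  proof (intro add_mono mult_left_mono K)
    have "P / g \<le> P" using g P0 by (simp add: divide_le_eq mult_le_cancel_left1)
    moreover have "P / g \<le> 1/s" using g s unfolding g_def by (simp add: field_simps)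
    ultimately show "P / g \<le> min P (1/s)" by simp
    show "K / g \<le> K" using g K by (simp add: divide_le_eq mult_le_cancel_left1)
  qed
  finally show ?thesis unfolding P_def by (simp add: algebra_simps)
qed

lemma deriv_fdelta:
  fixes c \<delta> u F1 :: real and f0 :: "real \<Rightarrow> real"
  assumes q: "0 < q" and \<delta>: "0 \<le> \<delta>" and f0: "(f0 has_real_derivative F1) (at u)"
  shows "deriv (fdelta q c f0 \<delta>) u = fdelta_slope (2*q - 2) c (sqrt \<delta>) (f0 u) F1 u"
proof -
  define n where "n = 2*q - 2"
  have n: "even n" "2*q - 1 = n + 1" unfolding n_def using q by auto
  have "fdelta q c f0 \<delta> = (\<lambda>v. (- c * v^(n+1) + f0 v) / (1 + sqrt \<delta> * v^n))"
    unfolding fdelta_def fnl_def n_def[symmetric] n(2) using n(1) by (simp add: power_even_abs)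
  moreover have "0 < 1 + sqrt \<delta> * u^n"
    using \<delta> n(1) by (simp add: zero_le_even_power add_pos_nonneg)
  then have "((\<lambda>v. (- c * v^(n+1) + f0 v) / (1 + sqrt \<delta> * v^n)) has_real_derivative
      fdelta_slope n c (sqrt \<delta>) (f0 u) F1 u) (at u)"
    by (intro has_real_derivative_regularised_quotient f0) auto
  ultimately show ?thesis
    unfolding n_def by (intro DERIV_imp_deriv) simp
qed

theorem lemma5p1:
  fixes q :: nat and c_f c_f0 c_f1 :: real and f0 f0' f0'' :: "real \<Rightarrow> real"
  assumes q: "q > 1"
    and cf: "c_f > 0" and cf0: "c_f0 > 0" and cf1: "c_f1 > 0"
    and d1: "\<And>v. (f0 has_real_derivative f0' v) (at v)"
    and d2: "\<And>v. (f0' has_real_derivative f0'' v) (at v)"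
    and b0: "\<And>v. \<bar>f0 v\<bar> \<le> c_f0 * (1 + \<bar>v\<bar> ^ (2*q - 2))"
    and b1: "\<And>v. \<bar>f0' v\<bar> + \<bar>f0'' v\<bar> \<le> c_f1 * (1 + \<bar>v\<bar> ^ (2*q - 3))"
  shows "\<exists>L l. \<forall>\<delta>. 0 < \<delta> \<and> \<delta> \<le> 1 \<longrightarrow>
           (\<forall>u. deriv (fdelta q c_f f0 \<delta>) u \<le> L) \<and>
           (\<forall>u. \<bar>deriv (fdelta q c_f f0 \<delta>) u\<bar> \<le> l * (1 + min (\<bar>u\<bar> ^ (2*q - 2)) (1 / sqrt \<delta>)))"
proof (intro exI allI impI conjI)
  define n where "n = 2*q - 2"
  have n: "even n" "2*q - 3 = n - 1" unfolding n_def using q by auto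
  have F0: "\<bar>f0 u\<bar> \<le> c_f0 * (1 + \<bar>u\<bar>^n)" for u
    using b0 unfolding n_def .
  have F1: "\<bar>f0' u\<bar> \<le> c_f1 * (1 + \<bar>u\<bar>^(n-1))" for u
    using b1[of u] unfolding n(2) by linarith
  fix \<delta> u :: real
  assume \<delta>: "0 < \<delta> \<and> \<delta> \<le> 1"
  then have s: "0 < sqrt \<delta>" "sqrt \<delta> \<le> 1" by auto
  have deriv: "deriv (fdelta q c_f f0 \<delta>) u = fdelta_slope n c_f (sqrt \<delta>) (f0 u) (f0' u) u"
    unfolding n_def using q \<delta> d1 by (intro deriv_fdelta) auto
  show "deriv (fdelta q c_f f0 \<delta>) u
      \<le> c_f1 + (c_f1 + real n * c_f0) * ((c_f1 + real n * c_f0) / c_f)^(n-1)"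
    unfolding deriv using s cf cf0 cf1 by (intro fdelta_slope_le n F0 F1) auto
  show "\<bar>deriv (fdelta q c_f f0 \<delta>) u\<bar>
      \<le> ((real n + 1) * c_f + 2 * c_f1 + real n * c_f0) * (1 + min (\<bar>u\<bar> ^ (2*q - 2)) (1 / sqrt \<delta>))"
    unfolding deriv n_def[symmetric] using s cf cf0 cf1 by (intro abs_fdelta_slope_le n F0 F1) auto
qed

end
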